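(* Let $X$ be a real Hilbert space, let $n\in\{3,4,\ldots\}$, let $U_1,\ldots,U_n$ be closed linear subspaces of $X$, $P_i := P_{U_i}$, and $Z := U_1\cap\cdots\cap U_n$. Define $M\colon X^{n-1}\to X^n$ by $M(z_1,\ldots,z_{n-1}) = (x_1,\ldots,x_n)$, where $x_1 = P_1 z_1$, $x_i = P_i(x_{i-1}+z_i-z_{i-1})$ for $2\le i\le n-1$, and $x_n = P_n(x_1+x_{n-1}-z_{n-1})$. Writing $Q_i\colon X^n\to X$ for the $i$-th coordinate map, define $T\colon X^{n-1}\to X^{n-1}$ by \[ T\mathbf z = \mathbf z + \big((Q_2-Q_1)M\mathbf z,\,(Q_3-Q_2)M\mathbf z,\,\ldots,\,(Q_n-Q_{n-1})M\mathbf z\big). \] Let $0<\lambda<1$ and $\mathbf z_0=(z_{0,1},\ldots,z_{0,n-1})\in X^{n-1}$, generate $\mathbf z_{k+1} = (1-\lambda)\mathbf z_k+\lambda T\mathbf z_k$, and set $p := \frac{1}{n-1}(z_{0,1}+\cdots+z_{0,n-1})$. Then there exists $\bar{\mathbf z}\in X^{n-1}$ such that $\mathbf z_k\to\bar{\mathbf z}\in\operatorname{Fix}T$ (in norm) and \[ M\mathbf z_k\to M\bar{\mathbf z} = (P_Zp,\ldots,P_Zp)\in X^n. \] In particular, with $Q_1$ also denoting the first-coordinate map on $X^{n-1}$, $P_1(Q_1\mathbf z_k) = Q_1M\mathbf z_k\to P_Z(p)=\frac{1}{n-1}P_Z(z_{0,1}+\cdots+z_{0,n-1})$. Consequently, if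 $x_0\in X$ and $\mathbf z_0=(x_0,\ldots,x_0)$, then $P_1Q_1\mathbf z_k\to P_Zx_0$.
   Context: $P_S$ denotes the orthogonal projection onto a closed linear subspace $S$; $\operatorname{Fix}T$ is the fixed point set of $T$. The map $M$ is the Malitsky-Tam splitting map specialized to the normal cone operators $A_i=N_{U_i}$, whose resolvents are $P_i$. *)

theory Defs
  imports "HOL-Analysis.Analysis"
begin

definition orth_proj :: "'a::real_inner set \<Rightarrow> 'a \<Rightarrow> 'a" where
  "orth_proj U x = (THE y. y \<in> U \<and> (\<forall>u\<in>U. inner (x - y) u = 0))"

text \<open>Coordinates x_1, ..., x_{n-1} of M z (indices start at 1; P i is the i-th projection).\<close>
fun mt_x :: "(nat \<Rightarrow> 'a \<Rightarrow> 'a::real_vector) \<Rightarrow> (nat \<Rightarrow> 'a) \<Rightarrow> nat \<Rightarrow> 'a" where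
  "mt_x P z 0 = 0"
| "mt_x P z (Suc 0) = P 1 (z 1)"
| "mt_x P z (Suc (Suc j)) = P (Suc (Suc j)) (mt_x P z (Suc j) + z (Suc (Suc j)) - z (Suc j))"

text \<open>The Malitsky-Tam map M : X^(n-1) -> X^n, vectors represented as functions on
  indices {1..n-1} resp. {1..n}.\<close>
definition mt_M :: "nat \<Rightarrow> (nat \<Rightarrow> 'a \<Rightarrow> 'a::real_vector) \<Rightarrow> (nat \<Rightarrow> 'a) \<Rightarrow> nat \<Rightarrow> 'a" where
  "mt_M n P z i = (if i = n then P n (mt_x P z 1 + mt_x P z (n - 1) - z (n - 1)) else mt_x P z i)"

definition mt_T :: "nat \<Rightarrow> (nat \<Rightarrow> 'a \<Rightarrow> 'a::real_vector) \<Rightarrow> (nat \<Rightarrow> 'a) \<Rightarrow> nat \<Rightarrow> 'a" where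
  "mt_T n P z i = z i + (mt_M n P z (Suc i) - mt_M n P z i)"

definition prod_norm :: "nat set \<Rightarrow> (nat \<Rightarrow> 'a::real_normed_vector) \<Rightarrow> real" where
  "prod_norm I f = sqrt (\<Sum>i\<in>I. (norm (f i))\<^sup>2)"

end

theory Submission
  imports Defs "HOL-Library.Poly_Mapping"
begin

text \<open>
  The map T is linear, and when the P_i are orthogonal projections the squared norm of T z
  equals that of z minus the squared distance between the first and the last coordinate of
  M z, so T is nonexpansive on the Hilbert space X^(n-1). For a linear nonexpansive map the
  averaged iteration converges to a fixed point: split z_0 orthogonally along the closure of
  the range of I - T; the orthogonal component is fixed by T, while the iterates of y - T y
  tend to 0 because each step lowers the squared norm by \<lambda>(1 - \<lambda>) |y_k - T y_k|^2.
  At a fixed point all coordinates of M coincide, so their common value lies in Z and equals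
  P_Z of every coordinate of the fixed point. Finally, P_Z of the coordinate sum of z_k does
  not depend on k, which identifies that value as P_Z p.
\<close>

section \<open>Orthogonal projections onto complete subspaces\<close>

lemma linear_le_quadratic_imp_zero:
  fixes a q :: real
  assumes q: "q \<ge> 0" and le: "\<And>t. 2 * t * a \<le> t\<^sup>2 * q"
  shows "a = 0"
proof -
  have "2 * a\<^sup>2 * (q + 1) = 2 * (a / (q + 1)) * a * (q + 1)\<^sup>2"
    using q by (simp add: field_simps power2_eq_square)
  also have "\<dots> \<le> (a / (q + 1))\<^sup>2 * q * (q + 1)\<^sup>2"
    using le by (rule mult_right_mono) simp
  also have "\<dots> = a\<^sup>2 * q"
    using q by (simp add: power_divide)
  finally have "a\<^sup>2 * (q + 2) \<le> 0" by (simp add: algebra_simps)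
  then show ?thesis using q by (simp add: mult_le_0_iff)
qed

lemma nearest_point_exists:
  fixes C :: "'a::real_inner set"
  assumes "convex C" "complete C" "C \<noteq> {}"
  obtains p where "p \<in> C" "\<And>c. c \<in> C \<Longrightarrow> norm (x - p) \<le> norm (x - c)"
proof -
  define f where "f c = (norm (x - c))\<^sup>2" for c
  define d where "d = Inf (f ` C)"
  have bdd: "bdd_below (f ` C)" unfolding f_def by (rule bdd_belowI[of _ 0]) auto
  have d_le: "d \<le> f c" if "c \<in> C" for c unfolding d_def using bdd that by (simp add: cInf_lower)
  have "\<exists>c\<in>C. f c < d + 1 / Suc k" for k
    using cInf_less_iff[OF _ bdd, of "d + 1 / Suc k"] \<open>C \<noteq> {}\<close> by (simp add: d_def)
  then obtain s where sC: "\<And>k. s k \<in> C" and sf: "\<And>k. f (s k) < d + 1 / Suc k"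
    by metis
  \<comment> \<open>parallelogram law, with the midpoint of a and b in C\<close>
  have parallelogram: "(dist a b)\<^sup>2 \<le> 2 * f a + 2 * f b - 4 * d" if "a \<in> C" "b \<in> C" for a b
  proof -
    have "(1/2) *\<^sub>R a + (1/2) *\<^sub>R b \<in> C" using that \<open>convex C\<close> by (simp add: convexD)
    moreover have "(dist a b)\<^sup>2 = 2 * f a + 2 * f b - 4 * f ((1/2) *\<^sub>R a + (1/2) *\<^sub>R b)"
      unfolding f_def dist_norm power2_norm_eq_inner by (simp add: inner_simps algebra_simps)
    ultimately show ?thesis using d_le by fastforce
  qed
  have eps: "(\<lambda>k. 1 / Suc k) \<longlonglongrightarrow> 0"
    using LIMSEQ_inverse_real_of_nat by (simp add: inverse_eq_divide)
  have "Cauchy s"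
  proof (rule metric_CauchyI)
    fix e :: real assume "e > 0"
    have "\<forall>\<^sub>F k in sequentially. 1 / Suc k < e\<^sup>2 / 4"
      using eps \<open>e > 0\<close> by (intro order_tendstoD(2)) auto
    then obtain N where N: "\<And>k. k \<ge> N \<Longrightarrow> 1 / Suc k < e\<^sup>2 / 4"
      unfolding eventually_sequentially by blast
    have "dist (s m) (s k) < e" if "m \<ge> N" "k \<ge> N" for m k
    proof -
      have "(dist (s m) (s k))\<^sup>2 < e\<^sup>2"
        using parallelogram[OF sC sC, of m k] sf[of m] sf[of k] N[OF \<open>m \<ge> N\<close>] N[OF \<open>k \<ge> N\<close>] by simp
      then show ?thesis using \<open>e > 0\<close> by (simp add: power_less_imp_less_base)
    qed
    then show "\<exists>N. \<forall>m\<ge>N. \<forall>k\<ge>N. dist (s m) (s k) < e" by blast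
  qed
  then obtain p where "p \<in> C" and lim: "s \<longlonglongrightarrow> p" using \<open>complete C\<close> sC completeE by metis
  have "(\<lambda>k. f (s k)) \<longlonglongrightarrow> f p" unfolding f_def by (intro tendsto_intros lim)
  moreover have "(\<lambda>k. d + 1 / Suc k) \<longlonglongrightarrow> d"
    using tendsto_add[OF tendsto_const eps] by simp
  ultimately have "f p \<le> d" using sf by (intro LIMSEQ_le) (auto intro: less_imp_le)
  then have "norm (x - p) \<le> norm (x - c)" if "c \<in> C" for c
    using d_le[OF that] by (simp add: f_def power2_le_imp_le)
  with \<open>p \<in> C\<close> show thesis by (rule that)
qed

lemma nearest_point_subspace_orthogonal:
  fixes C :: "'a::real_inner set"
  assumes C: "subspace C" and "p \<in> C" and nearest: "\<And>c. c \<in> C \<Longrightarrow> norm (x - p) \<le> norm (x - c)"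
    and "c \<in> C"
  shows "inner (x - p) c = 0"
proof (rule linear_le_quadratic_imp_zero[where q = "inner c c"])
  fix t :: real
  have "p + t *\<^sub>R c \<in> C" using C \<open>p \<in> C\<close> \<open>c \<in> C\<close> by (simp add: subspace_add subspace_scale)
  then have "(norm (x - p))\<^sup>2 \<le> (norm (x - (p + t *\<^sub>R c)))\<^sup>2" by (simp add: nearest)
  then show "2 * t * inner (x - p) c \<le> t\<^sup>2 * inner c c"
    unfolding power2_norm_eq_inner by (simp add: inner_simps inner_commute algebra_simps power2_eq_square)
qed simp

lemma exists_orthogonal_projection:
  fixes C :: "'a::real_inner set"
  assumes "subspace C" "complete C"
  obtains p where "p \<in> C" "\<And>c. c \<in> C \<Longrightarrow> inner (x - p) c = 0"
  using nearest_point_exists[of C x] nearest_point_subspace_orthogonal[of C _ x] assms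
  by (metis empty_iff subspace_0 subspace_imp_convex)

lemma orth_proj_unique:
  fixes U :: "'a::real_inner set"
  assumes U: "subspace U"
    and "y \<in> U" "\<And>u. u \<in> U \<Longrightarrow> inner (x - y) u = 0"
    and "y' \<in> U" "\<And>u. u \<in> U \<Longrightarrow> inner (x - y') u = 0"
  shows "y = y'"
proof -
  have "y - y' \<in> U" using U assms by (simp add: subspace_diff)
  then have "inner (x - y') (y - y') - inner (x - y) (y - y') = 0" using assms by simp
  then have "inner (y - y') (y - y') = 0" by (simp add: inner_diff_left)
  then show ?thesis by simp
qed

context
  fixes U :: "'a::{real_inner,complete_space} set"
  assumes U: "subspace U" "closed U"
begin

lemma orth_proj_in_orthogonal:
  "orth_proj U x \<in> U \<and> (\<forall>u\<in>U. inner (x - orth_proj U x) u = 0)"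
proof -
  obtain p where "p \<in> U" "\<And>u. u \<in> U \<Longrightarrow> inner (x - p) u = 0"
    using exists_orthogonal_projection U complete_eq_closed by blast
  then have "\<exists>!y. y \<in> U \<and> (\<forall>u\<in>U. inner (x - y) u = 0)"
    using orth_proj_unique[OF U(1)] by blast
  then show ?thesis unfolding orth_proj_def by (rule theI')
qed

lemma orth_proj_in: "orth_proj U x \<in> U"
  using orth_proj_in_orthogonal by blast

lemma orth_proj_orthogonal: "u \<in> U \<Longrightarrow> inner (x - orth_proj U x) u = 0"
  using orth_proj_in_orthogonal by blast

lemma orth_proj_eqI:
  assumes "y \<in> U" "\<And>u. u \<in> U \<Longrightarrow> inner (x - y) u = 0"
  shows "orth_proj U x = y"
  using orth_proj_unique[OF U(1) orth_proj_in orth_proj_orthogonal assms] .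

lemma orth_proj_id: "u \<in> U \<Longrightarrow> orth_proj U u = u"
  by (rule orth_proj_eqI) simp_all

lemma linear_orth_proj: "linear (orth_proj U)"
proof
  fix x y :: 'a and c :: real
  show "orth_proj U (x + y) = orth_proj U x + orth_proj U y"
    using orth_proj_orthogonal[of _ x] orth_proj_orthogonal[of _ y] U
    by (intro orth_proj_eqI) (auto simp: subspace_add orth_proj_in inner_simps algebra_simps)
  show "orth_proj U (c *\<^sub>R x) = c *\<^sub>R orth_proj U x"
    using orth_proj_orthogonal[of _ x] U
    by (intro orth_proj_eqI) (auto simp: subspace_scale orth_proj_in inner_simps algebra_simps)
qed

lemma norm_orth_proj_le: "norm (orth_proj U x) \<le> norm x"
proof -
  have "orthogonal (x - orth_proj U x) (orth_proj U x)"
    unfolding orthogonal_def by (rule orth_proj_orthogonal[OF orth_proj_in])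
  then have "(norm x)\<^sup>2 = (norm (x - orth_proj U x))\<^sup>2 + (norm (orth_proj U x))\<^sup>2"
    using norm_add_Pythagorean by fastforce
  then show ?thesis by (simp add: power2_le_imp_le)
qed

lemma bounded_linear_orth_proj: "bounded_linear (orth_proj U)"
  using linear_orth_proj norm_orth_proj_le
  by (intro bounded_linear_intro[where K = 1]) (simp_all add: linear_add linear_scale)

end

lemma orth_proj_orth_proj_subset:
  fixes U Z :: "'a::{real_inner,complete_space} set"
  assumes U: "subspace U" "closed U" and Z: "subspace Z" "closed Z" and "Z \<subseteq> U"
  shows "orth_proj Z (orth_proj U x) = orth_proj Z x"
proof -
  have "inner (x - orth_proj U x) u = 0" if "u \<in> Z" for u
    using that \<open>Z \<subseteq> U\<close> orth_proj_orthogonal[OF U] by blast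
  moreover have "inner (x - orth_proj Z x) u = 0" if "u \<in> Z" for u
    using that orth_proj_orthogonal[OF Z] by blast
  ultimately show ?thesis
    by (intro orth_proj_eqI[OF Z] orth_proj_in[OF Z]) (simp add: inner_diff_left)
qed

section \<open>Averaged iterations of linear nonexpansive maps\<close>

lemma subspace_closure:
  fixes S :: "'a::real_normed_vector set"
  assumes S: "subspace S"
  shows "subspace (closure S)"
  unfolding subspace_def
proof (intro conjI ballI allI)
  show "0 \<in> closure S" using S closure_subset subspace_0 by blast
next
  fix x y assume "x \<in> closure S" "y \<in> closure S"
  then have "x + y \<in> closure (S + S)" using closure_sum[of S S] by (auto intro: set_plus_intro)
  moreover have "S + S \<subseteq> S" using S by (auto simp: set_plus_def subspace_add)
  ultimately show "x + y \<in> closure S" using closure_mono by blast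
next
  fix c :: real and x assume "x \<in> closure S"
  then have "c *\<^sub>R x \<in> closure ((*\<^sub>R) c ` S)" using closure_scaleR[of c S] by blast
  moreover have "(*\<^sub>R) c ` S \<subseteq> S" using S by (auto simp: subspace_scale)
  ultimately show "c *\<^sub>R x \<in> closure S" using closure_mono by blast
qed

definition averaged :: "real \<Rightarrow> ('a \<Rightarrow> 'a) \<Rightarrow> 'a \<Rightarrow> 'a::real_vector" where
  "averaged lam T v = (1 - lam) *\<^sub>R v + lam *\<^sub>R T v"

lemma power2_norm_convex_comb:
  fixes a b :: "'a::real_inner"
  shows "(norm ((1 - lam) *\<^sub>R a + lam *\<^sub>R b))\<^sup>2
    = (1 - lam) * (norm a)\<^sup>2 + lam * (norm b)\<^sup>2 - lam * (1 - lam) * (norm (a - b))\<^sup>2"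
  unfolding power2_norm_eq_inner by (simp add: inner_simps inner_commute algebra_simps)

lemma linear_funpow:
  fixes f :: "'a::real_vector \<Rightarrow> 'a"
  shows "linear f \<Longrightarrow> linear (f ^^ k)"
  by (induction k) (simp_all add: linear_compose linearI)

lemma nonexpansive_fixed_point_if_orthogonal:
  fixes T :: "'a::real_inner \<Rightarrow> 'a"
  assumes "norm (T w) \<le> norm w" and "inner w (w - T w) = 0"
  shows "T w = w"
proof -
  have "(norm (T w - w))\<^sup>2 = (norm (T w))\<^sup>2 - (norm w)\<^sup>2 + 2 * inner w (w - T w)"
    unfolding power2_norm_eq_inner by (simp add: inner_simps inner_commute)
  also have "\<dots> \<le> 0" using assms by (simp add: power_mono)
  finally show ?thesis by simp
qed

lemma linear_averaged: "linear T \<Longrightarrow> linear (averaged lam T)"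
  unfolding averaged_def by (intro linearI) (simp_all add: linear_add linear_scale algebra_simps)

lemma averaged_iterate_commute:
  "linear T \<Longrightarrow> T ((averaged lam T ^^ k) v) = (averaged lam T ^^ k) (T v)"
  by (induction k) (simp_all add: averaged_def linear_add linear_scale)

lemma averaged_iterate_range:
  "linear T \<Longrightarrow> (averaged lam T ^^ k) (y - T y) = (averaged lam T ^^ k) y - T ((averaged lam T ^^ k) y)"
  by (simp add: linear_diff[OF linear_funpow[OF linear_averaged]] averaged_iterate_commute)

context
  fixes T :: "'a::real_inner \<Rightarrow> 'a" and D :: "'a set" and lam :: real
  assumes T: "linear T" and D: "subspace D" and TD: "\<And>v. v \<in> D \<Longrightarrow> T v \<in> D"
    and nonexp: "\<And>v. v \<in> D \<Longrightarrow> norm (T v) \<le> norm v"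
    and lam: "0 < lam" "lam < 1"
begin

lemma averaged_iterate_in: "v \<in> D \<Longrightarrow> (averaged lam T ^^ k) v \<in> D"
  by (induction k) (simp_all add: averaged_def TD D subspace_add subspace_scale)

lemma power2_norm_averaged_le:
  assumes "v \<in> D"
  shows "(norm (averaged lam T v))\<^sup>2 \<le> (norm v)\<^sup>2 - lam * (1 - lam) * (norm (v - T v))\<^sup>2"
proof -
  have "lam * (norm (T v))\<^sup>2 \<le> lam * (norm v)\<^sup>2"
    using nonexp[OF assms] lam by (simp add: power_mono)
  then show ?thesis unfolding averaged_def power2_norm_convex_comb by (simp add: algebra_simps)
qed

lemma norm_averaged_le: "v \<in> D \<Longrightarrow> norm (averaged lam T v) \<le> norm v"
  using power2_norm_averaged_le[of v] lam
  by (smt (verit) mult_nonneg_nonneg power2_le_imp_le zero_le_power2 norm_ge_zero)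

lemma norm_averaged_iterate_le: "v \<in> D \<Longrightarrow> norm ((averaged lam T ^^ k) v) \<le> norm v"
proof (induction k)
  case (Suc k)
  then show ?case using norm_averaged_le[OF averaged_iterate_in[OF Suc.prems, of k]] by simp
qed simp

\<comment> \<open>Each step lowers the squared norm by lam (1 - lam) times the square of the residual
  norm, so these squares are summable.\<close>
lemma averaged_iterates_asymptotically_regular:
  assumes "y \<in> D"
  shows "(\<lambda>k. (averaged lam T ^^ k) y - T ((averaged lam T ^^ k) y)) \<longlonglongrightarrow> 0"
proof -
  define g where "g k = lam * (1 - lam) * (norm ((averaged lam T ^^ k) y - T ((averaged lam T ^^ k) y)))\<^sup>2" for k
  have g_le: "(\<Sum>k<N. g k) \<le> (norm y)\<^sup>2 - (norm ((averaged lam T ^^ N) y))\<^sup>2" for N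
  proof (induction N)
    case (Suc N)
    then show ?case using power2_norm_averaged_le[OF averaged_iterate_in[OF assms, of N]] by (simp add: g_def)
  qed simp
  have "summable g"
  proof (rule summableI_nonneg_bounded)
    show "0 \<le> g k" for k using lam by (simp add: g_def)
    show "(\<Sum>k<N. g k) \<le> (norm y)\<^sup>2" for N
      using g_le[of N] zero_le_power2[of "norm ((averaged lam T ^^ N) y)"] by linarith
  qed
  moreover have "lam * (1 - lam) \<noteq> 0" using lam by simp
  ultimately have "(\<lambda>k. g k / (lam * (1 - lam))) \<longlonglongrightarrow> 0 / (lam * (1 - lam))"
    by (intro tendsto_divide summable_LIMSEQ_zero tendsto_const) simp
  then have "(\<lambda>k. (norm ((averaged lam T ^^ k) y - T ((averaged lam T ^^ k) y)))\<^sup>2) \<longlonglongrightarrow> 0"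
    using lam by (simp add: g_def)
  then have "(\<lambda>k. norm ((averaged lam T ^^ k) y - T ((averaged lam T ^^ k) y))) \<longlonglongrightarrow> sqrt 0"
    by (auto dest: tendsto_real_sqrt)
  then show ?thesis by (simp add: tendsto_norm_zero_iff)
qed


lemma closure_range_subset: "closed D \<Longrightarrow> closure ((\<lambda>y. y - T y) ` D) \<subseteq> D"
  by (rule closure_minimal) (use D TD in \<open>auto intro: subspace_diff\<close>)

\<comment> \<open>The iterates are uniformly bounded, so convergence to 0 passes from the range of
  the identity minus T to its closure.\<close>
lemma averaged_iterates_tendsto_zero:
  assumes "closed D" and r: "r \<in> closure ((\<lambda>y. y - T y) ` D)"
  shows "(\<lambda>k. (averaged lam T ^^ k) r) \<longlonglongrightarrow> 0"
proof (rule LIMSEQ_I)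
  fix e :: real assume "e > 0"
  then obtain r' where "r' \<in> (\<lambda>y. y - T y) ` D" "dist r' r < e / 2"
    using r unfolding closure_approachable by (meson half_gt_zero)
  then obtain y where "y \<in> D" and y: "dist (y - T y) r < e / 2" by blast
  have "(\<lambda>k. (averaged lam T ^^ k) (y - T y)) \<longlonglongrightarrow> 0"
    unfolding averaged_iterate_range[OF T] by (rule averaged_iterates_asymptotically_regular[OF \<open>y \<in> D\<close>])
  then obtain N where N: "\<And>k. k \<ge> N \<Longrightarrow> norm ((averaged lam T ^^ k) (y - T y)) < e / 2"
    using LIMSEQ_D[of _ 0 "e / 2"] \<open>e > 0\<close> by force
  have "r - (y - T y) \<in> D" using closure_range_subset[OF \<open>closed D\<close>] r \<open>y \<in> D\<close> D TD by (auto intro: subspace_diff)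
  have "norm ((averaged lam T ^^ k) r) < e" if "k \<ge> N" for k
  proof -
    have "(averaged lam T ^^ k) r = (averaged lam T ^^ k) (r - (y - T y)) + (averaged lam T ^^ k) (y - T y)"
      by (simp add: linear_diff[OF linear_funpow[OF linear_averaged[OF T]]])
    also have "norm \<dots> \<le> norm (r - (y - T y)) + norm ((averaged lam T ^^ k) (y - T y))"
      using norm_averaged_iterate_le[OF \<open>r - (y - T y) \<in> D\<close>, of k] norm_triangle_ineq by (smt (verit))
    also have "\<dots> < e / 2 + e / 2"
      using y N[OF that] by (intro add_le_less_mono) (simp_all add: dist_norm norm_minus_commute)
    finally show ?thesis by simp
  qed
  then show "\<exists>N. \<forall>k\<ge>N. norm ((averaged lam T ^^ k) r - 0) < e" by (intro exI[of _ N]) simp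
qed

\<comment> \<open>Split the starting point orthogonally along the closure of the range of the identity
  minus T: the orthogonal component is fixed by T, the other one is driven to 0.\<close>
lemma averaged_iterates_converge:
  assumes "complete D" and "w\<^sub>0 \<in> D"
  obtains w where "w \<in> D" "T w = w" "(\<lambda>k. (averaged lam T ^^ k) w\<^sub>0) \<longlonglongrightarrow> w"
proof -
  define C where "C = closure ((\<lambda>y. y - T y) ` D)"
  have "closed D" using \<open>complete D\<close> by (rule complete_imp_closed)
  have "linear (\<lambda>y. y - T y)"
    using T by (intro linearI) (simp_all add: linear_add linear_scale algebra_simps)
  then have "subspace ((\<lambda>y. y - T y) ` D)" using D by (rule linear_subspace_image)
  then have "subspace C" unfolding C_def by (rule subspace_closure)
  have "C \<subseteq> D"
    unfolding C_def by (rule closure_range_subset[OF \<open>closed D\<close>])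
  then have "complete C"
    using \<open>complete D\<close> unfolding C_def by (rule complete_closed_subset[OF closed_closure])
  then obtain p where "p \<in> C" and orth: "\<And>c. c \<in> C \<Longrightarrow> inner (w\<^sub>0 - p) c = 0"
    using exists_orthogonal_projection[OF \<open>subspace C\<close>] by blast
  define w where "w = w\<^sub>0 - p"
  have "w \<in> D"
    unfolding w_def using \<open>w\<^sub>0 \<in> D\<close> \<open>p \<in> C\<close> \<open>C \<subseteq> D\<close> by (intro subspace_diff[OF D]) auto
  have "w - T w \<in> (\<lambda>y. y - T y) ` D" using \<open>w \<in> D\<close> by simp
  then have "w - T w \<in> C" unfolding C_def using closure_subset by fast
  then have "inner w (w - T w) = 0" using orth by (simp add: w_def)
  with nonexp[OF \<open>w \<in> D\<close>] have "T w = w" by (rule nonexpansive_fixed_point_if_orthogonal)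
  then have "averaged lam T w = w" by (simp add: averaged_def algebra_simps)
  then have fixed: "(averaged lam T ^^ k) w = w" for k by (induction k) simp_all
  have "(averaged lam T ^^ k) w\<^sub>0 = w + (averaged lam T ^^ k) p" for k
  proof -
    have "(averaged lam T ^^ k) w\<^sub>0 = (averaged lam T ^^ k) (w + p)" by (simp add: w_def)
    then show ?thesis by (simp add: linear_add[OF linear_funpow[OF linear_averaged[OF T]]] fixed)
  qed
  moreover have "(\<lambda>k. w + (averaged lam T ^^ k) p) \<longlonglongrightarrow> w + 0"
    using averaged_iterates_tendsto_zero[OF \<open>closed D\<close>] \<open>p \<in> C\<close> unfolding C_def
    by (intro tendsto_add tendsto_const)
  ultimately have "(\<lambda>k. (averaged lam T ^^ k) w\<^sub>0) \<longlonglongrightarrow> w" by simp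
  with \<open>w \<in> D\<close> \<open>T w = w\<close> show thesis by (rule that)
qed

end

section \<open>Finitely supported sequences as an inner product space\<close>

instantiation poly_mapping :: (type, real_vector) real_vector
begin

lift_definition scaleR_poly_mapping :: "real \<Rightarrow> ('a \<Rightarrow>\<^sub>0 'b) \<Rightarrow> 'a \<Rightarrow>\<^sub>0 'b"
  is "\<lambda>r f i. r *\<^sub>R f i"
  by (rule finite_subset[rotated]) auto

instance
  by standard (transfer; simp add: algebra_simps)+

end

lemma lookup_scaleR [simp]: "Poly_Mapping.lookup (r *\<^sub>R f) i = r *\<^sub>R Poly_Mapping.lookup f i"
  by transfer simp

instantiation poly_mapping :: (type, real_inner) real_inner
begin

definition inner_poly_mapping :: "('a \<Rightarrow>\<^sub>0 'b) \<Rightarrow> ('a \<Rightarrow>\<^sub>0 'b) \<Rightarrow> real" where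
  "inner_poly_mapping f g = (\<Sum>i\<in>Poly_Mapping.keys f. inner (Poly_Mapping.lookup f i) (Poly_Mapping.lookup g i))"

definition norm_poly_mapping :: "('a \<Rightarrow>\<^sub>0 'b) \<Rightarrow> real" where
  "norm_poly_mapping f = sqrt (inner f f)"

definition sgn_poly_mapping :: "('a \<Rightarrow>\<^sub>0 'b) \<Rightarrow> 'a \<Rightarrow>\<^sub>0 'b" where
  "sgn_poly_mapping f = f /\<^sub>R norm f"

definition dist_poly_mapping :: "('a \<Rightarrow>\<^sub>0 'b) \<Rightarrow> ('a \<Rightarrow>\<^sub>0 'b) \<Rightarrow> real" where
  "dist_poly_mapping f g = norm (f - g)"

definition uniformity_poly_mapping :: "(('a \<Rightarrow>\<^sub>0 'b) \<times> ('a \<Rightarrow>\<^sub>0 'b)) filter" where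
  "uniformity_poly_mapping = (INF e\<in>{0<..}. principal {(f, g). dist f g < e})"

definition open_poly_mapping :: "('a \<Rightarrow>\<^sub>0 'b) set \<Rightarrow> bool" where
  "open_poly_mapping U = (\<forall>f\<in>U. \<forall>\<^sub>F (f', g) in uniformity. f' = f \<longrightarrow> g \<in> U)"

lemma inner_poly_mapping_superset:
  "finite A \<Longrightarrow> Poly_Mapping.keys f \<subseteq> A \<Longrightarrow>
    inner f g = (\<Sum>i\<in>A. inner (Poly_Mapping.lookup f i) (Poly_Mapping.lookup g i))"
  unfolding inner_poly_mapping_def by (rule sum.mono_neutral_left) (auto simp: in_keys_iff)

instance
proof
  fix f g h :: "'a \<Rightarrow>\<^sub>0 'b" and r :: real
  let ?K = "Poly_Mapping.keys f \<union> Poly_Mapping.keys g"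
  have K: "finite ?K" "Poly_Mapping.keys f \<subseteq> ?K" "Poly_Mapping.keys g \<subseteq> ?K"
    "Poly_Mapping.keys (f + g) \<subseteq> ?K" "Poly_Mapping.keys (r *\<^sub>R f) \<subseteq> ?K"
    using keys_add[of f g] by (auto simp: in_keys_iff)
  show "inner f g = inner g f"
    using inner_poly_mapping_superset[OF K(1)] K by (simp add: inner_commute)
  show "inner (f + g) h = inner f h + inner g h"
    using inner_poly_mapping_superset[OF K(1)] K by (simp add: lookup_add inner_add_left sum.distrib)
  show "inner (r *\<^sub>R f) g = r * inner f g"
    using inner_poly_mapping_superset[OF K(1)] K by (simp add: sum_distrib_left)
  show "0 \<le> inner f f"
    unfolding inner_poly_mapping_def by (simp add: sum_nonneg)
  show "inner f f = 0 \<longleftrightarrow> f = 0"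
    unfolding inner_poly_mapping_def
    by (auto simp: sum_nonneg_eq_0_iff in_keys_iff intro: poly_mapping_eqI)
qed (simp_all add: norm_poly_mapping_def sgn_poly_mapping_def dist_poly_mapping_def
       uniformity_poly_mapping_def open_poly_mapping_def)

end

lemma tendsto_prod_norm_zero:
  assumes "finite A" and "\<And>i. i \<in> A \<Longrightarrow> (\<lambda>k. f k i) \<longlonglongrightarrow> g i"
  shows "(\<lambda>k. prod_norm A (\<lambda>i. f k i - g i)) \<longlonglongrightarrow> 0"
proof -
  have "(\<lambda>k. (norm (f k i - g i))\<^sup>2) \<longlonglongrightarrow> 0" if "i \<in> A" for i
    using tendsto_power[OF tendsto_norm_zero[OF LIM_zero[OF assms(2)[OF that]]], of 2] by simp
  then have "(\<lambda>k. sqrt (\<Sum>i\<in>A. (norm (f k i - g i))\<^sup>2)) \<longlonglongrightarrow> sqrt 0"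
    by (intro tendsto_real_sqrt tendsto_null_sum)
  then show ?thesis by (simp add: prod_norm_def)
qed

definition supported_on :: "'a set \<Rightarrow> ('a \<Rightarrow>\<^sub>0 'b::zero) set" where
  "supported_on A = {f. Poly_Mapping.keys f \<subseteq> A}"

definition poly_mapping_on :: "'a set \<Rightarrow> ('a \<Rightarrow> 'b) \<Rightarrow> 'a \<Rightarrow>\<^sub>0 'b::zero" where
  "poly_mapping_on A f = Abs_poly_mapping (\<lambda>i. if i \<in> A then f i else 0)"

lemma lookup_poly_mapping_on:
  assumes "finite A"
  shows "Poly_Mapping.lookup (poly_mapping_on A f) i = (if i \<in> A then f i else 0)"
proof -
  have "finite {i. (if i \<in> A then f i else 0) \<noteq> 0}"
    by (rule finite_subset[OF _ assms]) auto
  then show ?thesis unfolding poly_mapping_on_def by simp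
qed

lemma poly_mapping_on_in: "finite A \<Longrightarrow> poly_mapping_on A f \<in> supported_on A"
  unfolding supported_on_def in_keys_iff subset_iff mem_Collect_eq by (auto simp: lookup_poly_mapping_on)

lemma keys_scaleR_subset: "Poly_Mapping.keys (c *\<^sub>R f) \<subseteq> Poly_Mapping.keys (f :: 'a \<Rightarrow>\<^sub>0 'b::real_vector)"
  unfolding in_keys_iff subset_iff mem_Collect_eq by auto

lemma subspace_supported_on: "subspace (supported_on A :: ('a \<Rightarrow>\<^sub>0 'b::real_vector) set)"
proof -
  have "Poly_Mapping.keys (f + g) \<subseteq> A" if "Poly_Mapping.keys f \<subseteq> A" "Poly_Mapping.keys g \<subseteq> A"
    for f g :: "'a \<Rightarrow>\<^sub>0 'b"
    using keys_add[of f g] that by blast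
  moreover have "Poly_Mapping.keys (c *\<^sub>R f) \<subseteq> A" if "Poly_Mapping.keys f \<subseteq> A"
    for c and f :: "'a \<Rightarrow>\<^sub>0 'b"
    using keys_scaleR_subset[of c f] that by blast
  ultimately show ?thesis unfolding subspace_def supported_on_def by simp
qed

lemma norm_eq_prod_norm:
  fixes f :: "nat \<Rightarrow>\<^sub>0 'a::real_inner"
  assumes "finite A" "f \<in> supported_on A"
  shows "norm f = prod_norm A (Poly_Mapping.lookup f)"
proof -
  have "inner f f = (\<Sum>i\<in>A. (norm (Poly_Mapping.lookup f i))\<^sup>2)"
    using assms inner_poly_mapping_superset[of A f f]
    by (simp add: supported_on_def power2_norm_eq_inner)
  then show ?thesis by (simp add: norm_eq_sqrt_inner prod_norm_def)
qed

lemma norm_lookup_le: "norm (Poly_Mapping.lookup (f :: 'a \<Rightarrow>\<^sub>0 'b::real_inner) i) \<le> norm f"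
proof -
  have "(norm (Poly_Mapping.lookup f i))\<^sup>2
      \<le> (\<Sum>j\<in>insert i (Poly_Mapping.keys f). (norm (Poly_Mapping.lookup f j))\<^sup>2)"
    by (rule member_le_sum) simp_all
  also have "\<dots> = (norm f)\<^sup>2"
    using inner_poly_mapping_superset[OF _ subset_insertI, of i f f]
    by (simp add: power2_norm_eq_inner)
  finally show ?thesis by (rule power2_le_imp_le) simp
qed

lemma bounded_linear_lookup: "bounded_linear (\<lambda>f :: 'a \<Rightarrow>\<^sub>0 'b::real_inner. Poly_Mapping.lookup f i)"
  by (rule bounded_linear_intro[where K = 1]) (simp_all add: lookup_add norm_lookup_le)

lemma complete_supported_on:
  assumes "finite A"
  shows "complete (supported_on A :: (nat \<Rightarrow>\<^sub>0 'a::{real_inner,complete_space}) set)"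
proof (rule completeI)
  fix f :: "nat \<Rightarrow> nat \<Rightarrow>\<^sub>0 'a"
  assume f: "\<forall>k. f k \<in> supported_on A" and "Cauchy f"
  define g where "g i = lim (\<lambda>k. Poly_Mapping.lookup (f k) i)" for i
  have g: "(\<lambda>k. Poly_Mapping.lookup (f k) i) \<longlonglongrightarrow> g i" for i
    using bounded_linear.Cauchy[OF bounded_linear_lookup \<open>Cauchy f\<close>]
    unfolding g_def by (simp add: Cauchy_convergent_iff convergent_LIMSEQ_iff)
  define l where "l = poly_mapping_on A g"
  have l: "l \<in> supported_on A" unfolding l_def by (rule poly_mapping_on_in[OF \<open>finite A\<close>])
  have norm_eq: "norm (f k - l) = prod_norm A (\<lambda>i. Poly_Mapping.lookup (f k) i - g i)" for k
  proof -
    have "f k - l \<in> supported_on A"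
      using f l by (simp add: subspace_diff[OF subspace_supported_on])
    then have "norm (f k - l) = prod_norm A (Poly_Mapping.lookup (f k - l))"
      by (rule norm_eq_prod_norm[OF \<open>finite A\<close>])
    also have "\<dots> = prod_norm A (\<lambda>i. Poly_Mapping.lookup (f k) i - g i)"
      unfolding prod_norm_def using \<open>finite A\<close>
      by (intro arg_cong[where f = sqrt] sum.cong) (simp_all add: l_def lookup_minus lookup_poly_mapping_on)
    finally show ?thesis .
  qed
  have "(\<lambda>k. prod_norm A (\<lambda>i. Poly_Mapping.lookup (f k) i - g i)) \<longlonglongrightarrow> 0"
    using tendsto_prod_norm_zero[of A "\<lambda>k i. Poly_Mapping.lookup (f k) i" g] \<open>finite A\<close> g by blast
  then have "(\<lambda>k. norm (f k - l)) \<longlonglongrightarrow> 0" by (simp only: norm_eq)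
  then have "f \<longlonglongrightarrow> l" by (simp add: tendsto_norm_zero_iff LIM_zero_iff)
  with l show "\<exists>l\<in>supported_on A. f \<longlonglongrightarrow> l" by blast
qed

section \<open>The Malitsky-Tam operators\<close>

lemma mt_x_cong: "(\<And>i. 1 \<le> i \<Longrightarrow> i \<le> j \<Longrightarrow> z i = z' i) \<Longrightarrow> mt_x P z j = mt_x P z' j"
  by (induction P z j rule: mt_x.induct) auto

lemma mt_x_linear_comb:
  assumes "\<And>i. 1 \<le> i \<Longrightarrow> i \<le> j \<Longrightarrow> linear (P i)"
  shows "mt_x P (\<lambda>i. a *\<^sub>R z i + b *\<^sub>R z' i) j = a *\<^sub>R mt_x P z j + b *\<^sub>R mt_x P z' j"
  using assms
proof (induction P z j rule: mt_x.induct)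
  case (2 P z)
  then show ?case by (simp add: linear_add linear_scale)
next
  case (3 P z j)
  then have "linear (P (Suc (Suc j)))" by simp
  moreover have "a *\<^sub>R mt_x P z (Suc j) + b *\<^sub>R mt_x P z' (Suc j) + (a *\<^sub>R z (Suc (Suc j)) + b *\<^sub>R z' (Suc (Suc j)))
      - (a *\<^sub>R z (Suc j) + b *\<^sub>R z' (Suc j))
    = a *\<^sub>R (mt_x P z (Suc j) + z (Suc (Suc j)) - z (Suc j)) + b *\<^sub>R (mt_x P z' (Suc j) + z' (Suc (Suc j)) - z' (Suc j))"
    by (simp add: algebra_simps)
  ultimately show ?case using 3 by (simp add: linear_add linear_scale)
qed simp

lemma mt_M_cong:
  assumes "n \<ge> 2" and "\<And>i. 1 \<le> i \<Longrightarrow> i \<le> n - 1 \<Longrightarrow> z i = z' i" and "i \<le> n"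
  shows "mt_M n P z i = mt_M n P z' i"
  using assms mt_x_cong[of _ z z' P] unfolding mt_M_def by auto

lemma mt_M_linear_comb:
  assumes "n \<ge> 2" and "\<And>i. 1 \<le> i \<Longrightarrow> i \<le> n \<Longrightarrow> linear (P i)" and "i \<le> n"
  shows "mt_M n P (\<lambda>i. a *\<^sub>R z i + b *\<^sub>R z' i) i = a *\<^sub>R mt_M n P z i + b *\<^sub>R mt_M n P z' i"
proof (cases "i = n")
  case True
  have x: "mt_x P (\<lambda>i. a *\<^sub>R z i + b *\<^sub>R z' i) j = a *\<^sub>R mt_x P z j + b *\<^sub>R mt_x P z' j" if "j \<le> n" for j
    using assms that by (intro mt_x_linear_comb) auto
  have "linear (P n)" using assms by simp
  moreover have "a *\<^sub>R mt_x P z 1 + b *\<^sub>R mt_x P z' 1 + (a *\<^sub>R mt_x P z (n-1) + b *\<^sub>R mt_x P z' (n-1))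
      - (a *\<^sub>R z (n-1) + b *\<^sub>R z' (n-1))
    = a *\<^sub>R (mt_x P z 1 + mt_x P z (n-1) - z (n-1)) + b *\<^sub>R (mt_x P z' 1 + mt_x P z' (n-1) - z' (n-1))"
    by (simp add: algebra_simps)
  ultimately show ?thesis
    using True \<open>n \<ge> 2\<close> unfolding mt_M_def
    by (simp only: if_True x[of 1] x[of "n - 1"] linear_add linear_scale diff_le_self) simp
next
  case False
  then show ?thesis using assms unfolding mt_M_def by (simp add: mt_x_linear_comb)
qed

lemma mt_T_cong:
  assumes "n \<ge> 2" and "\<And>i. 1 \<le> i \<Longrightarrow> i \<le> n - 1 \<Longrightarrow> z i = z' i" and "1 \<le> i" "i \<le> n - 1"
  shows "mt_T n P z i = mt_T n P z' i"
  using assms mt_M_cong[of n z z'] unfolding mt_T_def by simp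

lemma mt_T_linear_comb:
  assumes "n \<ge> 2" and "\<And>i. 1 \<le> i \<Longrightarrow> i \<le> n \<Longrightarrow> linear (P i)" and "i \<le> n - 1"
  shows "mt_T n P (\<lambda>i. a *\<^sub>R z i + b *\<^sub>R z' i) i = a *\<^sub>R mt_T n P z i + b *\<^sub>R mt_T n P z' i"
  using assms unfolding mt_T_def by (simp add: mt_M_linear_comb algebra_simps)

lemma mt_partial_norm_identity:
  assumes orth: "\<And>i b. 1 \<le> i \<Longrightarrow> i \<le> Suc k \<Longrightarrow> inner (b - P i b) (P i b) = 0"
  shows "(\<Sum>i\<in>{1..k}. (norm (z i + mt_x P z (Suc i) - mt_x P z i))\<^sup>2)
    = (\<Sum>i\<in>{1..k}. (norm (z i))\<^sup>2) + 2 * inner (z (Suc k)) (mt_x P z (Suc k))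
      - (norm (mt_x P z 1))\<^sup>2 - (norm (mt_x P z (Suc k)))\<^sup>2"
  using orth
proof (induction k)
  case 0
  then have "inner (z 1 - P 1 (z 1)) (P 1 (z 1)) = 0" by simp
  then show ?case by (simp add: power2_norm_eq_inner inner_diff_left)
next
  case (Suc k)
  define a u v where "a = z (Suc k)" and "u = mt_x P z (Suc k)" and "v = mt_x P z (Suc (Suc k))"
  have "inner (u + z (Suc (Suc k)) - a - v) v = 0"
    using Suc.prems[of "Suc (Suc k)" "u + z (Suc (Suc k)) - a"] by (simp add: a_def u_def v_def)
  then have "(norm (a + v - u))\<^sup>2 - (norm a)\<^sup>2
      = 2 * inner (z (Suc (Suc k))) v - (norm v)\<^sup>2 - 2 * inner a u + (norm u)\<^sup>2"
    by (simp add: power2_norm_eq_inner inner_simps inner_commute)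
  then show ?case using Suc by (simp add: a_def u_def v_def)
qed

lemma mt_T_norm_identity:
  assumes "n \<ge> 2" and orth: "\<And>i b. 1 \<le> i \<Longrightarrow> i \<le> n \<Longrightarrow> inner (b - P i b) (P i b) = 0"
  shows "(\<Sum>i\<in>{1..n-1}. (norm (mt_T n P z i))\<^sup>2)
    = (\<Sum>i\<in>{1..n-1}. (norm (z i))\<^sup>2) - (norm (mt_M n P z 1 - mt_M n P z n))\<^sup>2"
proof -
  obtain k where n: "n = Suc (Suc k)" using \<open>n \<ge> 2\<close> by (metis add_2_eq_Suc le_Suc_ex)
  define a u p v where "a = z (Suc k)" and "u = mt_x P z (Suc k)" and "p = mt_x P z 1"
    and "v = P n (p + u - a)"
  have "inner (p + u - a - v) v = 0" using orth[of n "p + u - a"] n by (simp add: v_def)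
  then have last: "(norm (a + v - u))\<^sup>2 = (norm a)\<^sup>2 - 2 * inner a u + (norm p)\<^sup>2 + (norm u)\<^sup>2 - (norm (p - v))\<^sup>2"
    by (simp add: power2_norm_eq_inner inner_simps inner_commute)
  have T: "mt_T n P z i = z i + mt_x P z (Suc i) - mt_x P z i" if "i \<in> {1..k}" for i
    using that n unfolding mt_T_def mt_M_def by auto
  have "mt_T n P z (Suc k) = a + v - u" "mt_M n P z 1 = p" "mt_M n P z n = v"
    using n unfolding mt_T_def mt_M_def a_def u_def p_def v_def by simp_all
  moreover have "(\<Sum>i\<in>{1..k}. (norm (mt_T n P z i))\<^sup>2) = (\<Sum>i\<in>{1..k}. (norm (z i + mt_x P z (Suc i) - mt_x P z i))\<^sup>2)"
    using T by (intro sum.cong) auto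
  moreover note mt_partial_norm_identity[of k P z] orth
  ultimately show ?thesis using last n by (simp add: a_def u_def p_def)
qed

text \<open>X^(n-1) is modelled by the finitely supported sequences with support in {1..n-1},
  on which the norm is prod_norm {1..n-1} (lemma norm_eq_prod_norm).\<close>

definition mt_T_on :: "nat \<Rightarrow> (nat \<Rightarrow> 'a \<Rightarrow> 'a) \<Rightarrow> (nat \<Rightarrow>\<^sub>0 'a) \<Rightarrow> nat \<Rightarrow>\<^sub>0 'a::real_vector" where
  "mt_T_on n P v = poly_mapping_on {1..n-1} (mt_T n P (Poly_Mapping.lookup v))"

lemma lookup_mt_T_on:
  "Poly_Mapping.lookup (mt_T_on n P v) i = (if i \<in> {1..n-1} then mt_T n P (Poly_Mapping.lookup v) i else 0)"
  unfolding mt_T_on_def by (simp add: lookup_poly_mapping_on)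

lemma linear_mt_T_on:
  assumes n: "n \<ge> 2" and linear_P: "\<And>i. 1 \<le> i \<Longrightarrow> i \<le> n \<Longrightarrow> linear (P i)"
  shows "linear (mt_T_on n P)"
proof
  fix u v :: "nat \<Rightarrow>\<^sub>0 'a" and c :: real
  have "mt_T n P (\<lambda>i. 1 *\<^sub>R Poly_Mapping.lookup u i + 1 *\<^sub>R Poly_Mapping.lookup v i) i
      = 1 *\<^sub>R mt_T n P (Poly_Mapping.lookup u) i + 1 *\<^sub>R mt_T n P (Poly_Mapping.lookup v) i" if "i \<le> n - 1" for i
    using n linear_P that by (rule mt_T_linear_comb)
  then show "mt_T_on n P (u + v) = mt_T_on n P u + mt_T_on n P v"
    by (intro poly_mapping_eqI) (simp add: lookup_mt_T_on lookup_add plus_poly_mapping.rep_eq)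
  have "mt_T n P (\<lambda>i. c *\<^sub>R Poly_Mapping.lookup u i + 0 *\<^sub>R Poly_Mapping.lookup u i) i
      = c *\<^sub>R mt_T n P (Poly_Mapping.lookup u) i + 0 *\<^sub>R mt_T n P (Poly_Mapping.lookup u) i" if "i \<le> n - 1" for i
    using n linear_P that by (rule mt_T_linear_comb)
  then show "mt_T_on n P (c *\<^sub>R u) = c *\<^sub>R mt_T_on n P u"
    by (intro poly_mapping_eqI) (simp add: lookup_mt_T_on scaleR_poly_mapping.rep_eq)
qed

lemma mt_T_on_in: "mt_T_on n P v \<in> supported_on {1..n-1}"
  unfolding mt_T_on_def by (rule poly_mapping_on_in) simp

lemma norm_mt_T_on_le:
  fixes P :: "nat \<Rightarrow> 'a::real_inner \<Rightarrow> 'a"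
  assumes n: "n \<ge> 2" and orth_P: "\<And>i b. 1 \<le> i \<Longrightarrow> i \<le> n \<Longrightarrow> inner (b - P i b) (P i b) = 0"
    and "v \<in> supported_on {1..n-1}"
  shows "norm (mt_T_on n P v) \<le> norm v"
proof -
  have "(norm (mt_T_on n P v))\<^sup>2 = (\<Sum>i\<in>{1..n-1}. (norm (mt_T n P (Poly_Mapping.lookup v) i))\<^sup>2)"
    using norm_eq_prod_norm[OF _ mt_T_on_in[of n P v]] by (simp add: prod_norm_def lookup_mt_T_on sum_nonneg)
  also have "\<dots> \<le> (\<Sum>i\<in>{1..n-1}. (norm (Poly_Mapping.lookup v i))\<^sup>2)"
    using mt_T_norm_identity[OF n orth_P] by simp
  also have "\<dots> = (norm v)\<^sup>2"
    using norm_eq_prod_norm[OF _ \<open>v \<in> supported_on {1..n-1}\<close>] by (simp add: prod_norm_def sum_nonneg)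
  finally show ?thesis by (rule power2_le_imp_le) simp
qed

lemma mt_iterates_converge:
  fixes P :: "nat \<Rightarrow> 'a::{real_inner,complete_space} \<Rightarrow> 'a" and z :: "nat \<Rightarrow> nat \<Rightarrow> 'a"
  assumes n: "n \<ge> 2" and linear_P: "\<And>i. 1 \<le> i \<Longrightarrow> i \<le> n \<Longrightarrow> linear (P i)"
    and orth_P: "\<And>i b. 1 \<le> i \<Longrightarrow> i \<le> n \<Longrightarrow> inner (b - P i b) (P i b) = 0"
    and lam: "0 < lam" "lam < 1"
    and iter: "\<forall>k. \<forall>i\<in>{1..n-1}. z (Suc k) i = (1 - lam) *\<^sub>R z k i + lam *\<^sub>R mt_T n P (z k) i"
  obtains zbar where "\<And>i. i \<in> {1..n-1} \<Longrightarrow> (\<lambda>k. z k i) \<longlonglongrightarrow> zbar i"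
    and "\<And>i. i \<in> {1..n-1} \<Longrightarrow> mt_T n P zbar i = zbar i"
proof -
  define W where "W k = poly_mapping_on {1..n-1} (z k)" for k
  have lookup_W: "Poly_Mapping.lookup (W k) i = (if i \<in> {1..n-1} then z k i else 0)" for k i
    by (simp add: W_def lookup_poly_mapping_on)
  have "W (Suc k) = averaged lam (mt_T_on n P) (W k)" for k
  proof (rule poly_mapping_eqI)
    fix i
    have "mt_T n P (Poly_Mapping.lookup (W k)) i = mt_T n P (z k) i" if "i \<in> {1..n-1}"
      using n that by (intro mt_T_cong) (auto simp: lookup_W)
    then show "Poly_Mapping.lookup (W (Suc k)) i = Poly_Mapping.lookup (averaged lam (mt_T_on n P) (W k)) i"
      using iter by (auto simp: lookup_W averaged_def lookup_add lookup_mt_T_on)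
  qed
  then have W: "W k = (averaged lam (mt_T_on n P) ^^ k) (W 0)" for k
    by (induction k) simp_all
  have "W 0 \<in> supported_on {1..n-1}" unfolding W_def by (rule poly_mapping_on_in) simp
  moreover have "linear (mt_T_on n P)" using n linear_P by (rule linear_mt_T_on)
  moreover have "norm (mt_T_on n P v) \<le> norm v" if "v \<in> supported_on {1..n-1}" for v
    using n orth_P that by (rule norm_mt_T_on_le)
  ultimately obtain w where "w \<in> supported_on {1..n-1}" and fixed: "mt_T_on n P w = w"
    and lim: "(\<lambda>k. (averaged lam (mt_T_on n P) ^^ k) (W 0)) \<longlonglongrightarrow> w"
    using averaged_iterates_converge[of "mt_T_on n P" "supported_on {1..n-1}" lam "W 0"]
      subspace_supported_on mt_T_on_in lam complete_supported_on[OF finite_atLeastAtMost] by blast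
  show thesis
  proof
    fix i assume "i \<in> {1..n-1}"
    have "(\<lambda>k. Poly_Mapping.lookup (W k) i) \<longlonglongrightarrow> Poly_Mapping.lookup w i"
      using bounded_linear.tendsto[OF bounded_linear_lookup lim] by (simp only: W[symmetric])
    then show "(\<lambda>k. z k i) \<longlonglongrightarrow> Poly_Mapping.lookup w i"
      using \<open>i \<in> {1..n-1}\<close> by (simp add: lookup_W)
    show "mt_T n P (Poly_Mapping.lookup w) i = Poly_Mapping.lookup w i"
      using \<open>i \<in> {1..n-1}\<close> arg_cong[OF fixed, of "\<lambda>v. Poly_Mapping.lookup v i"] by (simp add: lookup_mt_T_on)
  qed
qed

section \<open>Projections onto the closed subspaces U_1, ..., U_n\<close>

context
  fixes U :: "nat \<Rightarrow> 'a::{real_inner,complete_space} set" and n :: nat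
  assumes n: "n \<ge> 2" and U: "\<forall>i\<in>{1..n}. subspace (U i) \<and> closed (U i)"
begin

abbreviation (input) P\<^sub>U :: "nat \<Rightarrow> 'a \<Rightarrow> 'a" where "P\<^sub>U \<equiv> \<lambda>j. orth_proj (U j)"

abbreviation (input) Z\<^sub>U :: "'a set" where "Z\<^sub>U \<equiv> \<Inter>j\<in>{1..n}. U j"

lemma subspace_U: "1 \<le> i \<Longrightarrow> i \<le> n \<Longrightarrow> subspace (U i)"
  using U by simp

lemma closed_U: "1 \<le> i \<Longrightarrow> i \<le> n \<Longrightarrow> closed (U i)"
  using U by simp

lemma linear_P\<^sub>U: "1 \<le> i \<Longrightarrow> i \<le> n \<Longrightarrow> linear (P\<^sub>U i)"
  by (rule linear_orth_proj[OF subspace_U closed_U])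

lemma P\<^sub>U_in: "1 \<le> i \<Longrightarrow> i \<le> n \<Longrightarrow> P\<^sub>U i b \<in> U i"
  by (rule orth_proj_in[OF subspace_U closed_U])

lemma P\<^sub>U_orthogonal: "1 \<le> i \<Longrightarrow> i \<le> n \<Longrightarrow> inner (b - P\<^sub>U i b) (P\<^sub>U i b) = 0"
  by (rule orth_proj_orthogonal[OF subspace_U closed_U P\<^sub>U_in])

lemma isCont_P\<^sub>U: "1 \<le> i \<Longrightarrow> i \<le> n \<Longrightarrow> isCont (P\<^sub>U i) x"
  by (rule linear_continuous_at[OF bounded_linear_orth_proj[OF subspace_U closed_U]])

lemma subspace_Z\<^sub>U: "subspace Z\<^sub>U"
  using subspace_U by (simp add: subspace_def)

lemma closed_Z\<^sub>U: "closed Z\<^sub>U"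
  using closed_U by (intro closed_INT) simp

lemma linear_orth_proj_Z\<^sub>U: "linear (orth_proj Z\<^sub>U)"
  by (rule linear_orth_proj[OF subspace_Z\<^sub>U closed_Z\<^sub>U])

lemma orth_proj_Z\<^sub>U_P\<^sub>U: "1 \<le> i \<Longrightarrow> i \<le> n \<Longrightarrow> orth_proj Z\<^sub>U (P\<^sub>U i x) = orth_proj Z\<^sub>U x"
  by (intro orth_proj_orth_proj_subset subspace_U closed_U subspace_Z\<^sub>U closed_Z\<^sub>U) auto

lemma orth_proj_Z\<^sub>U_mt_x: "1 \<le> j \<Longrightarrow> j \<le> n - 1 \<Longrightarrow> orth_proj Z\<^sub>U (mt_x P\<^sub>U z j) = orth_proj Z\<^sub>U (z j)"
proof (induction j)
  case (Suc j)
  show ?case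
  proof (cases "j = 0")
    case True
    then show ?thesis using n orth_proj_Z\<^sub>U_P\<^sub>U[of 1 "z 1"] by simp
  next
    case False
    then obtain j' where j: "j = Suc j'" by (cases j) auto
    have "orth_proj Z\<^sub>U (mt_x P\<^sub>U z (Suc j)) = orth_proj Z\<^sub>U (mt_x P\<^sub>U z j + z (Suc j) - z j)"
      using Suc.prems j orth_proj_Z\<^sub>U_P\<^sub>U[of "Suc j" "mt_x P\<^sub>U z j + z (Suc j) - z j"] by simp
    also have "\<dots> = orth_proj Z\<^sub>U (mt_x P\<^sub>U z j) + orth_proj Z\<^sub>U (z (Suc j)) - orth_proj Z\<^sub>U (z j)"
      by (simp only: linear_add[OF linear_orth_proj_Z\<^sub>U] linear_diff[OF linear_orth_proj_Z\<^sub>U])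
    finally show ?thesis using Suc False by simp
  qed
qed simp

lemma orth_proj_Z\<^sub>U_mt_M_last: "orth_proj Z\<^sub>U (mt_M n P\<^sub>U z n) = orth_proj Z\<^sub>U (mt_M n P\<^sub>U z 1)"
proof -
  have "orth_proj Z\<^sub>U (mt_M n P\<^sub>U z n) = orth_proj Z\<^sub>U (mt_x P\<^sub>U z 1 + mt_x P\<^sub>U z (n-1) - z (n-1))"
    using n orth_proj_Z\<^sub>U_P\<^sub>U[of n] by (simp add: mt_M_def)
  also have "\<dots> = orth_proj Z\<^sub>U (mt_x P\<^sub>U z 1) + orth_proj Z\<^sub>U (mt_x P\<^sub>U z (n-1)) - orth_proj Z\<^sub>U (z (n-1))"
    by (simp only: linear_add[OF linear_orth_proj_Z\<^sub>U] linear_diff[OF linear_orth_proj_Z\<^sub>U])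
  also have "\<dots> = orth_proj Z\<^sub>U (mt_x P\<^sub>U z 1)"
    using n orth_proj_Z\<^sub>U_mt_x[of "n - 1" z] by simp
  finally show ?thesis using n by (simp add: mt_M_def)
qed

lemma mt_M_in_U:
  assumes "1 \<le> i" "i \<le> n"
  shows "mt_M n P\<^sub>U z i \<in> U i"
proof (cases "i = n")
  case True
  then show ?thesis using n by (simp add: mt_M_def P\<^sub>U_in)
next
  case False
  obtain j where "i = Suc j" using assms by (cases i) auto
  then show ?thesis using False assms by (cases j) (simp_all add: mt_M_def P\<^sub>U_in)
qed

lemma tendsto_mt_x:
  assumes lim: "\<And>i. 1 \<le> i \<Longrightarrow> i \<le> n - 1 \<Longrightarrow> (\<lambda>k. z k i) \<longlonglongrightarrow> z' i"
  shows "j \<le> n - 1 \<Longrightarrow> (\<lambda>k. mt_x P\<^sub>U (z k) j) \<longlonglongrightarrow> mt_x P\<^sub>U z' j"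
proof (induction j)
  case (Suc j)
  have "(\<lambda>k. z k (Suc j)) \<longlonglongrightarrow> z' (Suc j)" using Suc.prems by (intro lim) auto
  show ?case
  proof (cases j)
    case 0
    then show ?thesis
      using isCont_tendsto_compose[OF isCont_P\<^sub>U \<open>(\<lambda>k. z k (Suc j)) \<longlonglongrightarrow> z' (Suc j)\<close>] n by simp
  next
    case (Suc j')
    then have "(\<lambda>k. mt_x P\<^sub>U (z k) j + z k (Suc j) - z k j) \<longlonglongrightarrow> mt_x P\<^sub>U z' j + z' (Suc j) - z' j"
      using Suc.IH Suc.prems \<open>(\<lambda>k. z k (Suc j)) \<longlonglongrightarrow> z' (Suc j)\<close> by (intro tendsto_intros lim) auto
    moreover have "isCont (P\<^sub>U (Suc j)) x" for x using Suc.prems by (intro isCont_P\<^sub>U) auto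
    ultimately show ?thesis
      using isCont_tendsto_compose[where g = "P\<^sub>U (Suc j)"] Suc by simp
  qed
qed simp

lemma tendsto_mt_M:
  assumes "\<And>i. 1 \<le> i \<Longrightarrow> i \<le> n - 1 \<Longrightarrow> (\<lambda>k. z k i) \<longlonglongrightarrow> z' i" and "i \<le> n"
  shows "(\<lambda>k. mt_M n P\<^sub>U (z k) i) \<longlonglongrightarrow> mt_M n P\<^sub>U z' i"
proof (cases "i = n")
  case True
  have "(\<lambda>k. mt_x P\<^sub>U (z k) 1 + mt_x P\<^sub>U (z k) (n-1) - z k (n-1)) \<longlonglongrightarrow> mt_x P\<^sub>U z' 1 + mt_x P\<^sub>U z' (n-1) - z' (n-1)"
    using n assms(1) by (intro tendsto_intros tendsto_mt_x) auto
  moreover have "isCont (P\<^sub>U n) x" for x using n by (intro isCont_P\<^sub>U) auto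
  ultimately show ?thesis
    using True n isCont_tendsto_compose[where g = "P\<^sub>U n"] by (simp add: mt_M_def)
next
  case False
  then show ?thesis using assms by (simp add: mt_M_def tendsto_mt_x)
qed

lemma mt_fixed_point_M:
  assumes fixed: "\<forall>i\<in>{1..n-1}. mt_T n P\<^sub>U zbar i = zbar i" and "i \<in> {1..n}"
  shows "mt_M n P\<^sub>U zbar i = (1 / real (n - 1)) *\<^sub>R orth_proj Z\<^sub>U (\<Sum>j\<in>{1..n-1}. zbar j)"
proof -
  define x where "x = mt_M n P\<^sub>U zbar 1"
  have M_eq_x: "mt_M n P\<^sub>U zbar j = x" if "j \<in> {1..n}" for j
    using that
  proof (induction j)
    case (Suc j)
    then show ?case
      using fixed[rule_format, of j] by (cases "j = 0") (auto simp: x_def mt_T_def)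
  qed simp
  have "x \<in> Z\<^sub>U" using M_eq_x mt_M_in_U by fastforce
  have "orth_proj Z\<^sub>U (zbar j) = x" if "j \<in> {1..n-1}" for j
  proof -
    have "j \<in> {1..n}" "j \<noteq> n" using that n by auto
    then have "mt_x P\<^sub>U zbar j = x" using M_eq_x[of j] by (simp add: mt_M_def)
    then show ?thesis
      using that orth_proj_Z\<^sub>U_mt_x[of j zbar] orth_proj_id[OF subspace_Z\<^sub>U closed_Z\<^sub>U \<open>x \<in> Z\<^sub>U\<close>] by simp
  qed
  then have "orth_proj Z\<^sub>U (\<Sum>j\<in>{1..n-1}. zbar j) = (\<Sum>j\<in>{1..n-1}. x)"
    unfolding linear_sum[OF linear_orth_proj_Z\<^sub>U] by (rule sum.cong[OF refl])
  also have "\<dots> = real (n - 1) *\<^sub>R x" by (simp add: sum_constant_scaleR)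
  finally have "orth_proj Z\<^sub>U (\<Sum>j\<in>{1..n-1}. zbar j) = real (n - 1) *\<^sub>R x" .
  then show ?thesis using M_eq_x[OF assms(2)] n by simp
qed

\<comment> \<open>The increments of the sum of the coordinates are multiples of the last minus the first
  coordinate of M, which have the same projection onto the intersection.\<close>
lemma orth_proj_Z\<^sub>U_sum_iterates:
  assumes iter: "\<forall>k. \<forall>i\<in>{1..n-1}. z (Suc k) i = (1 - lam) *\<^sub>R z k i + lam *\<^sub>R mt_T n P\<^sub>U (z k) i"
  shows "orth_proj Z\<^sub>U (\<Sum>i\<in>{1..n-1}. z k i) = orth_proj Z\<^sub>U (\<Sum>i\<in>{1..n-1}. z 0 i)"
proof (induction k)
  case (Suc k)
  have "(\<Sum>i\<in>{1..n-1}. z (Suc k) i)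
      = (\<Sum>i\<in>{1..n-1}. z k i + lam *\<^sub>R (mt_M n P\<^sub>U (z k) (Suc i) - mt_M n P\<^sub>U (z k) i))"
    using iter by (intro sum.cong) (auto simp: mt_T_def algebra_simps)
  also have "\<dots> = (\<Sum>i\<in>{1..n-1}. z k i) + lam *\<^sub>R (mt_M n P\<^sub>U (z k) n - mt_M n P\<^sub>U (z k) 1)"
    using n by (simp add: sum.distrib scaleR_sum_right[symmetric] sum_Suc_diff)
  finally have "orth_proj Z\<^sub>U (\<Sum>i\<in>{1..n-1}. z (Suc k) i) = orth_proj Z\<^sub>U (\<Sum>i\<in>{1..n-1}. z k i)
      + lam *\<^sub>R (orth_proj Z\<^sub>U (mt_M n P\<^sub>U (z k) n) - orth_proj Z\<^sub>U (mt_M n P\<^sub>U (z k) 1))"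
    by (simp only: linear_add[OF linear_orth_proj_Z\<^sub>U] linear_scale[OF linear_orth_proj_Z\<^sub>U]
        linear_diff[OF linear_orth_proj_Z\<^sub>U])
  then show ?case using Suc.IH orth_proj_Z\<^sub>U_mt_M_last[of "z k"] by simp
qed simp

lemma mt_iterates_limit:
  assumes lam: "0 < lam" "lam < 1"
    and iter: "\<forall>k. \<forall>i\<in>{1..n-1}. z (Suc k) i = (1 - lam) *\<^sub>R z k i + lam *\<^sub>R mt_T n P\<^sub>U (z k) i"
  obtains zbar where "\<And>i. i \<in> {1..n-1} \<Longrightarrow> (\<lambda>k. z k i) \<longlonglongrightarrow> zbar i"
    and "\<forall>i\<in>{1..n-1}. mt_T n P\<^sub>U zbar i = zbar i"
    and "\<And>i. i \<in> {1..n} \<Longrightarrow> (\<lambda>k. mt_M n P\<^sub>U (z k) i) \<longlonglongrightarrow> mt_M n P\<^sub>U zbar i"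
    and "\<And>i. i \<in> {1..n} \<Longrightarrow> mt_M n P\<^sub>U zbar i = orth_proj Z\<^sub>U ((1 / real (n - 1)) *\<^sub>R (\<Sum>j\<in>{1..n-1}. z 0 j))"
proof -
  obtain zbar where lim: "\<And>i. i \<in> {1..n-1} \<Longrightarrow> (\<lambda>k. z k i) \<longlonglongrightarrow> zbar i"
    and fixed: "\<And>i. i \<in> {1..n-1} \<Longrightarrow> mt_T n P\<^sub>U zbar i = zbar i"
    using mt_iterates_converge[OF n linear_P\<^sub>U P\<^sub>U_orthogonal lam iter] by blast
  have "(\<lambda>k. \<Sum>i\<in>{1..n-1}. z k i) \<longlonglongrightarrow> (\<Sum>i\<in>{1..n-1}. zbar i)"
    by (rule tendsto_sum) (rule lim)
  then have "(\<lambda>k. orth_proj Z\<^sub>U (\<Sum>i\<in>{1..n-1}. z k i)) \<longlonglongrightarrow> orth_proj Z\<^sub>U (\<Sum>i\<in>{1..n-1}. zbar i)"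
    by (rule bounded_linear.tendsto[OF bounded_linear_orth_proj[OF subspace_Z\<^sub>U closed_Z\<^sub>U]])
  moreover have "(\<lambda>k. orth_proj Z\<^sub>U (\<Sum>i\<in>{1..n-1}. z k i)) = (\<lambda>k. orth_proj Z\<^sub>U (\<Sum>i\<in>{1..n-1}. z 0 i))"
    by (intro ext orth_proj_Z\<^sub>U_sum_iterates[OF iter])
  ultimately have "(\<lambda>k. orth_proj Z\<^sub>U (\<Sum>i\<in>{1..n-1}. z 0 i)) \<longlonglongrightarrow> orth_proj Z\<^sub>U (\<Sum>i\<in>{1..n-1}. zbar i)"
    by simp
  then have "orth_proj Z\<^sub>U (\<Sum>i\<in>{1..n-1}. zbar i) = orth_proj Z\<^sub>U (\<Sum>i\<in>{1..n-1}. z 0 i)"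
    by (simp add: LIMSEQ_const_iff)
  moreover have fixed': "\<forall>i\<in>{1..n-1}. mt_T n P\<^sub>U zbar i = zbar i" using fixed by blast
  ultimately have M_zbar: "mt_M n P\<^sub>U zbar i = orth_proj Z\<^sub>U ((1 / real (n - 1)) *\<^sub>R (\<Sum>j\<in>{1..n-1}. z 0 j))"
    if "i \<in> {1..n}" for i
    using mt_fixed_point_M[OF _ that] linear_scale[OF linear_orth_proj_Z\<^sub>U] by simp
  have M_lim: "(\<lambda>k. mt_M n P\<^sub>U (z k) i) \<longlonglongrightarrow> mt_M n P\<^sub>U zbar i" if "i \<in> {1..n}" for i
    using that by (intro tendsto_mt_M) (simp_all add: lim)
  show thesis using lim fixed' M_lim M_zbar by (rule that)
qed

end

theorem mainTheorem2:
  fixes U :: "nat \<Rightarrow> 'a::{real_inner, complete_space} set"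
    and n :: nat and lam :: real
    and z :: "nat \<Rightarrow> nat \<Rightarrow> 'a"
  assumes n3: "n \<ge> 3"
    and U_sub: "\<forall>i\<in>{1..n}. subspace (U i) \<and> closed (U i)"
    and lam: "0 < lam" "lam < 1"
    and iter: "\<forall>k. \<forall>i\<in>{1..n-1}.
       z (Suc k) i = (1 - lam) *\<^sub>R z k i + lam *\<^sub>R mt_T n (\<lambda>j. orth_proj (U j)) (z k) i"
  shows "let P = (\<lambda>j. orth_proj (U j));
             Z = (\<Inter>j\<in>{1..n}. U j);
             p = (1 / real (n - 1)) *\<^sub>R (\<Sum>i\<in>{1..n-1}. z 0 i)
         in (\<exists>zbar :: nat \<Rightarrow> 'a.
               (\<lambda>k. prod_norm {1..n-1} (\<lambda>i. z k i - zbar i)) \<longlonglongrightarrow> 0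
             \<and> (\<forall>i\<in>{1..n-1}. mt_T n P zbar i = zbar i)
             \<and> (\<lambda>k. prod_norm {1..n} (\<lambda>i. mt_M n P (z k) i - mt_M n P zbar i)) \<longlonglongrightarrow> 0
             \<and> (\<forall>i\<in>{1..n}. mt_M n P zbar i = orth_proj Z p))
           \<and> (\<forall>k. P 1 (z k 1) = mt_M n P (z k) 1)
           \<and> (\<lambda>k. mt_M n P (z k) 1) \<longlonglongrightarrow> orth_proj Z p
           \<and> orth_proj Z p = (1 / real (n - 1)) *\<^sub>R orth_proj Z (\<Sum>i\<in>{1..n-1}. z 0 i)
           \<and> (\<forall>x0. (\<forall>i\<in>{1..n-1}. z 0 i = x0) \<longrightarrow> (\<lambda>k. P 1 (z k 1)) \<longlonglongrightarrow> orth_proj Z x0)"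
proof -
  have n: "n \<ge> 2" using n3 by simp
  define p where "p = (1 / real (n - 1)) *\<^sub>R (\<Sum>i\<in>{1..n-1}. z 0 i)"
  obtain zbar where lim: "\<And>i. i \<in> {1..n-1} \<Longrightarrow> (\<lambda>k. z k i) \<longlonglongrightarrow> zbar i"
    and fixed: "\<forall>i\<in>{1..n-1}. mt_T n (\<lambda>j. orth_proj (U j)) zbar i = zbar i"
    and M_lim: "\<And>i. i \<in> {1..n} \<Longrightarrow>
      (\<lambda>k. mt_M n (\<lambda>j. orth_proj (U j)) (z k) i) \<longlonglongrightarrow> mt_M n (\<lambda>j. orth_proj (U j)) zbar i"
    and M_zbar: "\<And>i. i \<in> {1..n} \<Longrightarrow> mt_M n (\<lambda>j. orth_proj (U j)) zbar i = orth_proj (\<Inter>j\<in>{1..n}. U j) p"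
    using mt_iterates_limit[OF n U_sub lam iter] unfolding p_def by blast
  have first: "\<forall>k. orth_proj (U 1) (z k 1) = mt_M n (\<lambda>j. orth_proj (U j)) (z k) 1"
    using n by (simp add: mt_M_def)
  have lim_first: "(\<lambda>k. mt_M n (\<lambda>j. orth_proj (U j)) (z k) 1) \<longlonglongrightarrow> orth_proj (\<Inter>j\<in>{1..n}. U j) p"
    using M_lim[of 1] M_zbar[of 1] n by simp
  have "(\<lambda>k. orth_proj (U 1) (z k 1)) \<longlonglongrightarrow> orth_proj (\<Inter>j\<in>{1..n}. U j) x0"
    if "\<forall>i\<in>{1..n-1}. z 0 i = x0" for x0
    using that n first lim_first by (simp add: p_def sum_constant_scaleR)
  moreover have "(\<lambda>k. prod_norm {1..n-1} (\<lambda>i. z k i - zbar i)) \<longlonglongrightarrow> 0"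
    by (rule tendsto_prod_norm_zero) (simp_all add: lim)
  moreover have "(\<lambda>k. prod_norm {1..n} (\<lambda>i. mt_M n (\<lambda>j. orth_proj (U j)) (z k) i
      - mt_M n (\<lambda>j. orth_proj (U j)) zbar i)) \<longlonglongrightarrow> 0"
    by (rule tendsto_prod_norm_zero) (simp_all add: M_lim)
  moreover have "orth_proj (\<Inter>j\<in>{1..n}. U j) p
      = (1 / real (n - 1)) *\<^sub>R orth_proj (\<Inter>j\<in>{1..n}. U j) (\<Sum>i\<in>{1..n-1}. z 0 i)"
    unfolding p_def by (rule linear_scale[OF linear_orth_proj_Z\<^sub>U[OF n U_sub]])
  ultimately show ?thesis
    using fixed M_zbar first lim_first unfolding Let_def p_def[symmetric] by blast
qed

end
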